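(* $$\lim_{n\to\infty}\frac{|CK_n|}{|K_n|}=1.$$
   Context: $K_n=\{\sigma\in S_n: |\sigma_i-\sigma_{i+1}|>1 \text{ for all } 1\le i\le n-1\}$ (king permutations, in one-line notation), and $CK_n=\{\sigma\in K_n: |\sigma_1-\sigma_n|>1\}$ (cylindrical king permutations). *)

theory Defs
  imports "HOL-Analysis.Analysis" "HOL-Combinatorics.Permutations"
begin

definition king_perms :: "nat \<Rightarrow> (nat \<Rightarrow> nat) set" where
  "king_perms n = {\<sigma>. \<sigma> permutes {1..n} \<and>
     (\<forall>i. 1 \<le> i \<and> i \<le> n - 1 \<longrightarrow> \<bar>int (\<sigma> i) - int (\<sigma> (i + 1))\<bar> > 1)}"

definition cyl_king_perms :: "nat \<Rightarrow> (nat \<Rightarrow> nat) set" where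
  "cyl_king_perms n = {\<sigma> \<in> king_perms n. \<bar>int (\<sigma> 1) - int (\<sigma> n)\<bar> > 1}"

end

theory Submission
  imports Defs "HOL-Real_Asymp.Real_Asymp"
begin

text \<open>
  Moving the last entry \<open>\<sigma> n\<close> of a king permutation to a position \<open>j \<in> {2..n-1}\<close> creates
  at most two new adjacencies, and each of them is forbidden for at most three values of \<open>j\<close>;
  so every king permutation admits at least \<open>n - 8\<close> such moves that yield a king permutation
  again. If \<open>\<sigma>\<close> is not cylindrical, i.e. \<open>|\<sigma> 1 - \<sigma> n| \<le> 1\<close>, the result \<open>\<tau>\<close> satisfies
  \<open>|\<tau> j - \<tau> 1| \<le> 1\<close>, which for a given \<open>\<tau>\<close> holds for at most three positions \<open>j\<close>, and
  \<open>\<sigma>\<close> is recovered from \<open>(\<tau>, j)\<close>. Double counting the pairs \<open>(\<sigma>, j)\<close> gives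
  \<open>|K\<^sub>n - CK\<^sub>n| (n - 8) \<le> 3 |K\<^sub>n|\<close>.
\<close>

lemma king_perms_finite: "finite (king_perms n)"
  by (rule finite_subset[OF _ finite_permutations[of "{1..n}"]]) (auto simp: king_perms_def)

lemma king_perms_nonempty:
  assumes "4 \<le> n"
  shows "king_perms n \<noteq> {}"
proof -
  define m where "m = n div 2"
  have m: "2 * m \<le> n" "n \<le> 2 * m + 1" "2 \<le> m"
    using assms unfolding m_def by auto
  define w where "w i = (if i \<in> {1..n} then if i \<le> m then 2 * i else 2 * (i - m) - 1 else i)" for i
  have "inj_on w {1..n}"
  proof (rule inj_onI)
    fix x y assume "x \<in> {1..n}" "y \<in> {1..n}" "w x = w y"
    then show "x = y"
      unfolding w_def by (cases "x \<le> m"; cases "y \<le> m") (simp_all, presburger+)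
  qed
  then have "w permutes {1..n}"
    by (rule inj_imp_permutes) (use m in \<open>auto simp: w_def\<close>)
  moreover have "\<bar>int (w i) - int (w (i + 1))\<bar> > 1" if "1 \<le> i" "i \<le> n - 1" for i
    using that m by (cases "i + 1 \<le> m"; cases "i = m") (auto simp: w_def)
  ultimately have "w \<in> king_perms n"
    by (simp add: king_perms_def)
  then show ?thesis
    by auto
qed

lemma card_near_le_3:
  assumes "inj_on f A"
  shows "card {x \<in> A. \<bar>int (f x) - int v\<bar> \<le> 1} \<le> 3"
proof -
  let ?X = "{x \<in> A. \<bar>int (f x) - int v\<bar> \<le> 1}"
  have "inj_on f ?X"
    using assms by (rule inj_on_subset) auto
  moreover have "f ` ?X \<subseteq> {v - 1, v, v + 1}"
    by auto
  ultimately have "card ?X \<le> card {v - 1, v, v + 1}"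
    by (intro card_inj_on_le) auto
  also have "\<dots> \<le> 3"
    by (simp add: card_insert_if)
  finally show ?thesis .
qed

lemma double_counting_le:
  assumes "finite A" "\<And>x. x \<in> A \<Longrightarrow> finite (F x)"
    and "finite B" "\<And>y. y \<in> B \<Longrightarrow> finite (G y)"
    and "inj_on h (Sigma A F)" "h ` Sigma A F \<subseteq> Sigma B G"
    and "\<And>x. x \<in> A \<Longrightarrow> a \<le> card (F x)" "\<And>y. y \<in> B \<Longrightarrow> card (G y) \<le> b"
  shows "card A * a \<le> card B * b"
proof -
  have "card A * a \<le> (\<Sum>x\<in>A. card (F x))"
    using sum_bounded_below[of A a "\<lambda>x. card (F x)"] assms(7) by (simp add: mult.commute)
  also have "\<dots> = card (Sigma A F)"
    using assms(1,2) by (simp add: card_SigmaI)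
  also have "\<dots> \<le> card (Sigma B G)"
    using assms(3-6) by (intro card_inj_on_le) auto
  also have "\<dots> = (\<Sum>y\<in>B. card (G y))"
    using assms(3,4) by (simp add: card_SigmaI)
  also have "\<dots> \<le> card B * b"
    using sum_bounded_above[of B "\<lambda>y. card (G y)" b] assms(8) by simp
  finally show ?thesis .
qed

text \<open>\<open>\<sigma> \<circ> move_last_to n j\<close> is \<open>\<sigma>\<close> with its entry \<open>\<sigma> n\<close> moved to position \<open>j\<close>,
  the entries \<open>\<sigma> j, \<dots>, \<sigma> (n - 1)\<close> shifting one place to the right.\<close>

definition move_last_to :: "nat \<Rightarrow> nat \<Rightarrow> nat \<Rightarrow> nat" where
  "move_last_to n j i = (if i < j \<or> n < i then i else if i = j then n else i - 1)"

lemma move_last_to_permutes: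
  assumes "1 \<le> j" "j \<le> n"
  shows "move_last_to n j permutes {1..n}"
  by (rule inj_imp_permutes) (use assms in \<open>auto simp: move_last_to_def inj_on_def split: if_splits\<close>)

lemma king_perms_compose_move_last_to:
  assumes \<sigma>: "\<sigma> \<in> king_perms n" and j: "2 \<le> j" "j \<le> n - 1"
    and before: "\<bar>int (\<sigma> (j - 1)) - int (\<sigma> n)\<bar> > 1"
    and after: "\<bar>int (\<sigma> j) - int (\<sigma> n)\<bar> > 1"
  shows "\<sigma> \<circ> move_last_to n j \<in> king_perms n"
proof -
  have p: "\<sigma> permutes {1..n}"
    and adj: "\<And>i. 1 \<le> i \<Longrightarrow> i \<le> n - 1 \<Longrightarrow> \<bar>int (\<sigma> i) - int (\<sigma> (i + 1))\<bar> > 1"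
    using \<sigma> by (auto simp: king_perms_def)
  have "\<sigma> \<circ> move_last_to n j permutes {1..n}"
    using j by (intro permutes_compose[OF move_last_to_permutes p]) auto
  moreover have "\<bar>int (\<sigma> (move_last_to n j i)) - int (\<sigma> (move_last_to n j (i + 1)))\<bar> > 1"
    if i: "1 \<le> i" "i \<le> n - 1" for i
  proof -
    consider "i + 1 < j" | "i + 1 = j" | "i = j" | "j < i"
      by linarith
    then show ?thesis
    proof cases
      case 1
      then show ?thesis using adj[OF i] by (simp add: move_last_to_def)
    next
      case 2
      then show ?thesis using before j by (auto simp: move_last_to_def abs_minus_commute)
    next
      case 3
      then show ?thesis using after j by (auto simp: move_last_to_def abs_minus_commute)
    next
      case 4
      then have "move_last_to n j i = i - 1" "move_last_to n j (i + 1) = i"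
        using i by (auto simp: move_last_to_def)
      then show ?thesis using adj[of "i - 1"] 4 i j by simp
    qed
  qed
  ultimately show ?thesis
    by (simp add: king_perms_def)
qed

lemma card_move_last_to_king_ge:
  assumes \<sigma>: "\<sigma> \<in> king_perms n"
  shows "n - 8 \<le> card {j \<in> {2..n-1}. \<sigma> \<circ> move_last_to n j \<in> king_perms n}"
proof -
  have "inj \<sigma>"
    using \<sigma> by (auto simp: king_perms_def intro: permutes_inj)
  define X1 where "X1 = {j \<in> {2..n-1}. \<bar>int (\<sigma> (j - 1)) - int (\<sigma> n)\<bar> \<le> 1}"
  define X2 where "X2 = {j \<in> {2..n-1}. \<bar>int (\<sigma> j) - int (\<sigma> n)\<bar> \<le> 1}"
  have "inj_on (\<lambda>j. \<sigma> (j - 1)) {2..n-1}"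
  proof (rule inj_onI)
    fix x y assume "x \<in> {2..n-1}" "y \<in> {2..n-1}" "\<sigma> (x - 1) = \<sigma> (y - 1)"
    then show "x = y"
      using injD[OF \<open>inj \<sigma>\<close>] by fastforce
  qed
  then have "card X1 \<le> 3"
    unfolding X1_def by (rule card_near_le_3)
  moreover have "card X2 \<le> 3"
    unfolding X2_def using \<open>inj \<sigma>\<close> by (intro card_near_le_3) (auto intro: inj_on_subset)
  ultimately have "n - 8 \<le> card {2..n-1} - card (X1 \<union> X2)"
    using card_Un_le[of X1 X2] by simp
  also have "\<dots> \<le> card ({2..n-1} - (X1 \<union> X2))"
    by (rule diff_card_le_card_Diff) (simp add: X1_def X2_def)
  also have "\<dots> \<le> card {j \<in> {2..n-1}. \<sigma> \<circ> move_last_to n j \<in> king_perms n}"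
    by (intro card_mono) (auto simp: X1_def X2_def intro: king_perms_compose_move_last_to[OF \<sigma>])
  finally show ?thesis .
qed

lemma card_noncyl_king_perms_le:
  "card (king_perms n - cyl_king_perms n) * (n - 8) \<le> card (king_perms n) * 3"
proof (rule double_counting_le)
  let ?h = "\<lambda>(\<sigma>, j). (\<sigma> \<circ> move_last_to n j, j)"
  let ?F = "\<lambda>\<sigma>. {j \<in> {2..n-1}. \<sigma> \<circ> move_last_to n j \<in> king_perms n}"
  let ?G = "\<lambda>\<tau>. {j \<in> {2..n-1}. \<bar>int (\<tau> j) - int (\<tau> 1)\<bar> \<le> 1}"
  let ?D = "Sigma (king_perms n - cyl_king_perms n) ?F"
  show "inj_on ?h ?D"
  proof (rule inj_onI)
    fix x y
    assume "x \<in> ?D" "y \<in> ?D" "?h x = ?h y"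
    then obtain \<sigma> \<sigma>' j where xy: "x = (\<sigma>, j)" "y = (\<sigma>', j)" and j: "2 \<le> j" "j \<le> n - 1"
      and eq: "\<sigma> \<circ> move_last_to n j = \<sigma>' \<circ> move_last_to n j"
      by force
    have "surj (move_last_to n j)"
      using j by (intro permutes_surj[OF move_last_to_permutes]) auto
    then have "\<sigma> = \<sigma>'"
      by (rule surj_fun_eq) (simp add: eq)
    then show "x = y"
      by (simp add: xy)
  qed
  have "(\<sigma> \<circ> move_last_to n j, j) \<in> Sigma (king_perms n) ?G"
    if \<sigma>: "\<sigma> \<in> king_perms n - cyl_king_perms n" and j: "j \<in> ?F \<sigma>" for \<sigma> j
  proof -
    have "move_last_to n j 1 = 1" "move_last_to n j j = n"
      using j by (auto simp: move_last_to_def)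
    moreover have "\<bar>int (\<sigma> 1) - int (\<sigma> n)\<bar> \<le> 1"
      using \<sigma> by (auto simp: cyl_king_perms_def)
    ultimately show ?thesis
      using j by (simp add: abs_minus_commute)
  qed
  then show "?h ` ?D \<subseteq> Sigma (king_perms n) ?G"
    by auto
  show "\<And>\<tau>. \<tau> \<in> king_perms n \<Longrightarrow> card (?G \<tau>) \<le> 3"
    by (intro card_near_le_3) (auto simp: king_perms_def intro: permutes_inj inj_on_subset)
  show "\<And>\<sigma>. \<sigma> \<in> king_perms n - cyl_king_perms n \<Longrightarrow> n - 8 \<le> card (?F \<sigma>)"
    using card_move_last_to_king_ge by blast
qed (simp_all add: king_perms_finite)

lemma cyl_king_ratio_ge:
  assumes "9 \<le> n"
  shows "1 - 3 / (real n - 8) \<le> real (card (cyl_king_perms n)) / real (card (king_perms n))"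
proof -
  let ?k = "card (king_perms n)" and ?b = "card (king_perms n - cyl_king_perms n)"
  have "?k > 0"
    using king_perms_nonempty[of n] king_perms_finite[of n] assms by (simp add: card_gt_0_iff)
  have "real (?b * (n - 8)) \<le> real (?k * 3)"
    using card_noncyl_king_perms_le[of n] by (simp only: of_nat_le_iff)
  then have "real ?b * (real n - 8) \<le> real ?k * 3"
    using assms by (simp add: of_nat_diff)
  then have "real ?b / real ?k \<le> 3 / (real n - 8)"
    using \<open>?k > 0\<close> assms by (simp add: field_simps)
  moreover have "cyl_king_perms n \<subseteq> king_perms n"
    by (auto simp: cyl_king_perms_def)
  then have "real (card (cyl_king_perms n)) = real ?k - real ?b"
    by (simp add: card_Diff_subset king_perms_finite finite_subset of_nat_diff card_mono)
  ultimately show ?thesis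
    using \<open>?k > 0\<close> by (simp add: diff_divide_distrib)
qed

theorem theorem3p2:
  shows "(\<lambda>n. real (card (cyl_king_perms n)) / real (card (king_perms n))) \<longlonglongrightarrow> 1"
proof (rule tendsto_sandwich)
  show "\<forall>\<^sub>F n in sequentially.
      1 - 3 / (real n - 8) \<le> real (card (cyl_king_perms n)) / real (card (king_perms n))"
    using cyl_king_ratio_ge eventually_sequentially by blast
  have "card (cyl_king_perms n) \<le> card (king_perms n)" for n
    by (intro card_mono king_perms_finite) (auto simp: cyl_king_perms_def)
  then have "real (card (cyl_king_perms n)) / real (card (king_perms n)) \<le> 1" for n
    by (auto simp: divide_le_eq_1)
  then show "\<forall>\<^sub>F n in sequentially.
      real (card (cyl_king_perms n)) / real (card (king_perms n)) \<le> 1"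
    by (intro always_eventually allI)
  show "(\<lambda>n. 1 - 3 / (real n - 8)) \<longlonglongrightarrow> 1"
    by real_asymp
qed simp

end
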